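(* Let $x_1, \ldots, x_n, y \in \mathcal{X}$ and $k \in \mathbb{N}$. If $t = \operatorname{imax}(\operatorname{imax}(\cdots\operatorname{imax}(s^k(y), x_1)\cdots, x_{n-1}), x_n)$, then \[ t =_{\mathcal{L}} \max\big(A(\emptyset, x_n, 0), A(\{x_n\}, x_{n-1}, 0), \ldots, A(\{x_2, \ldots, x_n\}, x_1, 0), A(\{x_1, \ldots, x_n\}, y, k)\big), \] where the generic term is $A(\{x_{i+1},\ldots,x_n\}, x_i, 0)$ for $i = n, n-1, \ldots, 1$. If $t = \operatorname{imax}(\operatorname{imax}(\cdots\operatorname{imax}(s^k(0), x_1)\cdots, x_{n-1}), x_n)$, then \[ t =_{\mathcal{L}} \max\big(A(\emptyset, x_n, 0), A(\{x_n\}, x_{n-1}, 0), \ldots, A(\{x_2, \ldots, x_n\}, x_1, 0), B(\{x_1, \ldots, x_n\}, k)\big). \]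
   Context: $\operatorname{imax}\colon \mathbb{N}\times\mathbb{N}\to\mathbb{N}$ is defined by $\operatorname{imax}(i,0)=0$ and $\operatorname{imax}(i,j+1)=\max(i,j+1)$. Levels are terms of the grammar $t ::= x \mid 0 \mid s(t) \mid \max(t,t) \mid \operatorname{imax}(t,t)$, with $x$ in a countable set of variables $\mathcal{X}$; $s^k$ is $k$ applications of $s$. A valuation is a function $\sigma\colon\mathcal{X}\to\mathbb{N}$; values are defined by $[0]_\sigma=0$, $[x]_\sigma=\sigma(x)$, $[s(t)]_\sigma=[t]_\sigma+1$, $[\max(t_1,t_2)]_\sigma=\max([t_1]_\sigma,[t_2]_\sigma)$, $[\operatorname{imax}(t_1,t_2)]_\sigma=\operatorname{imax}([t_1]_\sigma,[t_2]_\sigma)$. Sublevel symbols: for a finite $E \subseteq \mathcal{X}$, $x \in \mathcal{X}$, $S \in \mathbb{N}$, $A(E, x, S)$ and $B(E, S)$ have values $[A(E,x,S)]_\sigma = 0$ if some $y \in E$ has $\sigma(y)=0$, and $\sigma(x)+S$ otherwise; $[B(E,S)]_\sigma = 0$ if some $y\in E$ has $\sigma(y)=0$, and $S$ otherwise. Maxima of such expressions are evaluated pointwise. Two expressions $t_1,t_2$ satisfy $t_1 =_{\mathcal{L}} t_2$ if $[t_1]_\sigma=[t_2]_\sigma$ for all valuations $\sigma$. *)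

theory Defs
  imports Main
begin

definition imax :: "nat \<Rightarrow> nat \<Rightarrow> nat" where
  "imax i j = (if j = 0 then 0 else max i j)"

datatype 'v level = Var 'v | Zero | Succ "'v level" | LMax "'v level" "'v level"
  | LImax "'v level" "'v level"

fun lval :: "('v \<Rightarrow> nat) \<Rightarrow> 'v level \<Rightarrow> nat" where
  "lval \<sigma> Zero = 0"
| "lval \<sigma> (Var x) = \<sigma> x"
| "lval \<sigma> (Succ t) = Suc (lval \<sigma> t)"
| "lval \<sigma> (LMax t u) = max (lval \<sigma> t) (lval \<sigma> u)"
| "lval \<sigma> (LImax t u) = imax (lval \<sigma> t) (lval \<sigma> u)"

definition succs :: "nat \<Rightarrow> 'v level \<Rightarrow> 'v level" where
  "succs k t = (Succ ^^ k) t"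

datatype 'v sublevel = SubA "'v set" 'v nat | SubB "'v set" nat

fun subval :: "('v \<Rightarrow> nat) \<Rightarrow> 'v sublevel \<Rightarrow> nat" where
  "subval \<sigma> (SubA E x S) = (if \<exists>y\<in>E. \<sigma> y = 0 then 0 else \<sigma> x + S)"
| "subval \<sigma> (SubB E S) = (if \<exists>y\<in>E. \<sigma> y = 0 then 0 else S)"

definition maxval :: "('v \<Rightarrow> nat) \<Rightarrow> 'v sublevel list \<Rightarrow> nat" where
  "maxval \<sigma> ts = Max (set (map (subval \<sigma>) ts))"

text \<open>imax(imax(...imax(t0, x_1)..., x_{n-1}), x_n) for xs = [x_1,...,x_n]\<close>
definition imax_chain :: "'v level \<Rightarrow> 'v list \<Rightarrow> 'v level" where
  "imax_chain t0 xs = foldl (\<lambda>t x. LImax t (Var x)) t0 xs"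

text \<open>The list A(\<emptyset>,x_n,0), A({x_n},x_{n-1},0), ..., A({x_2..x_n},x_1,0)\<close>
definition chainAs :: "'v list \<Rightarrow> 'v sublevel list" where
  "chainAs xs = map (\<lambda>i. SubA (set (drop i xs)) (xs ! (i - 1)) 0) (rev [1..<length xs + 1])"

end

theory Submission
  imports Defs
begin

text \<open>Induction on the chain from its outermost variable: appending \<open>x\<close> turns the value \<open>v\<close>
  into \<open>imax v (\<sigma> x)\<close>, i.e. \<open>0\<close> if \<open>\<sigma> x = 0\<close> and \<open>max v (\<sigma> x)\<close> otherwise. On the sublevel
  side, \<open>x\<close> joins the guard set of every symbol already present, which zeroes them all exactly
  when \<open>\<sigma> x = 0\<close>, and the new symbol \<open>A(\<emptyset>, x, 0)\<close> contributes \<open>\<sigma> x\<close>.\<close>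

lemma lval_succs: "lval \<sigma> (succs k t) = lval \<sigma> t + k"
  unfolding succs_def by (induction k) auto

lemma lval_imax_chain_snoc:
  "lval \<sigma> (imax_chain t0 (xs @ [x])) = imax (lval \<sigma> (imax_chain t0 xs)) (\<sigma> x)"
  by (simp add: imax_chain_def)

lemma chainAs_snoc:
  "chainAs (xs @ [x]) =
     SubA {} x 0 # map (\<lambda>i. SubA (insert x (set (drop i xs))) (xs ! (i - 1)) 0)
                       (rev [1..<length xs + 1])"
proof -
  have "rev [1..<length (xs @ [x]) + 1] = (length xs + 1) # rev [1..<length xs + 1]"
    by simp
  then show ?thesis
    unfolding chainAs_def by (auto simp: nth_append intro!: map_cong)
qed

lemma maxval_chainAs_snoc:
  assumes guard: "\<And>x E. subval \<sigma> (F (insert x E)) = (if \<sigma> x = 0 then 0 else subval \<sigma> (F E))"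
  shows "maxval \<sigma> (chainAs (xs @ [x]) @ [F (set (xs @ [x]))])
       = imax (maxval \<sigma> (chainAs xs @ [F (set xs)])) (\<sigma> x)"
proof -
  let ?vals = "set (map (subval \<sigma>) (chainAs xs @ [F (set xs)]))"
  have "set (map (subval \<sigma>) (chainAs (xs @ [x]) @ [F (set (xs @ [x]))]))
      = (if \<sigma> x = 0 then {0} else insert (\<sigma> x) ?vals)"
    unfolding chainAs_snoc using guard[of x "set xs"]
    by (auto simp: chainAs_def image_iff)
  moreover have "finite ?vals" and "?vals \<noteq> {}"
    by simp_all
  ultimately show ?thesis
    by (simp add: maxval_def imax_def max.commute)
qed

text \<open>\<open>F E\<close> abstracts the final symbol, \<open>A(E, y, k)\<close> or \<open>B(E, k)\<close>, as a function of its guard set.\<close>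

lemma lval_imax_chain_eq_maxval:
  assumes guard: "\<And>x E. subval \<sigma> (F (insert x E)) = (if \<sigma> x = 0 then 0 else subval \<sigma> (F E))"
    and base: "lval \<sigma> t0 = subval \<sigma> (F {})"
  shows "lval \<sigma> (imax_chain t0 xs) = maxval \<sigma> (chainAs xs @ [F (set xs)])"
proof (induction xs rule: rev_induct)
  case Nil
  then show ?case
    using base by (simp add: imax_chain_def maxval_def chainAs_def)
next
  case (snoc x xs)
  have "lval \<sigma> (imax_chain t0 (xs @ [x])) = imax (lval \<sigma> (imax_chain t0 xs)) (\<sigma> x)"
    by (rule lval_imax_chain_snoc)
  also have "\<dots> = maxval \<sigma> (chainAs (xs @ [x]) @ [F (set (xs @ [x]))])"
    unfolding snoc.IH by (rule maxval_chainAs_snoc[OF guard, symmetric])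
  finally show ?case .
qed

theorem proposition22:
  fixes xs :: "nat list" and y :: nat and k :: nat
  shows "(\<forall>\<sigma>. lval \<sigma> (imax_chain (succs k (Var y)) xs)
             = maxval \<sigma> (chainAs xs @ [SubA (set xs) y k]))
       \<and> (\<forall>\<sigma>. lval \<sigma> (imax_chain (succs k Zero) xs)
             = maxval \<sigma> (chainAs xs @ [SubB (set xs) k]))"
proof (intro conjI allI)
  fix \<sigma> :: "nat \<Rightarrow> nat"
  show "lval \<sigma> (imax_chain (succs k (Var y)) xs) = maxval \<sigma> (chainAs xs @ [SubA (set xs) y k])"
    by (rule lval_imax_chain_eq_maxval[where F = "\<lambda>E. SubA E y k"])
       (simp_all add: lval_succs)
  show "lval \<sigma> (imax_chain (succs k Zero) xs) = maxval \<sigma> (chainAs xs @ [SubB (set xs) k])"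
    by (rule lval_imax_chain_eq_maxval[where F = "\<lambda>E. SubB E k"])
       (simp_all add: lval_succs)
qed

end
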